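(* Let $h:H\to K$ be an isomorphism between subgroups of a group $G$, and $\mathcal F\subset\mathcal P_G$ an $h$-invariant left-invariant lower family. If $A\subset H$ and $A\notin\tau^\alpha(\mathcal F)$ for some ordinal $\alpha$, then $h(A)\cup z\,h(A)\notin\tau^{\alpha+1}(\mathcal F)$ for every $z\in G\setminus\{e\}$.
   Context: $\mathcal F$ is $h$-invariant if for every $A\subset H$: $A\in\mathcal F$ iff $h(A)\in\mathcal F$. Left-invariant: $xF\in\mathcal F$ for $F\in\mathcal F$, $x\in G$; lower: closed under subsets. $\tau(\mathcal F)=\{A\subset G: xA\cap yA\in\mathcal F$ for all distinct $x,y\in G\}$, $\tau^0(\mathcal F)=\mathcal F$, $\tau^{<\alpha}(\mathcal F)=\bigcup_{\beta<\alpha}\tau^\beta(\mathcal F)$, $\tau^\alpha(\mathcal F)=\tau(\tau^{<\alpha}(\mathcal F))$ for $\alpha>0$. *)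

theory Defs
  imports "HOL-Algebra.Algebra"
begin

definition tau :: "('a, 'b) monoid_scheme \<Rightarrow> 'a set set \<Rightarrow> 'a set set" where
  "tau G \<F> = {A. A \<subseteq> carrier G \<and>
     (\<forall>x\<in>carrier G. \<forall>y\<in>carrier G. x \<noteq> y \<longrightarrow>
        (x <#\<^bsub>G\<^esub> A) \<inter> (y <#\<^bsub>G\<^esub> A) \<in> \<F>)}"

text \<open>Transfinite iterates tau^alpha, indexed by the elements of a well-ordered type
  (standing for ordinals): tau^alpha(F) = F if alpha is the least element, and
  tau^alpha(F) = tau(Union_{beta<alpha} tau^beta(F)) otherwise.\<close>
definition tau_iter :: "('a, 'b) monoid_scheme \<Rightarrow> 'a set set \<Rightarrow> 'o::wellorder \<Rightarrow> 'a set set" where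
  "tau_iter G \<F> = wfrec {(x, y). x < y}
     (\<lambda>r \<alpha>. if (\<forall>\<beta>. \<not> \<beta> < \<alpha>) then \<F> else tau G (\<Union>\<beta>\<in>{\<beta>. \<beta> < \<alpha>}. r \<beta>))"

definition h_invariant :: "('a \<Rightarrow> 'a) \<Rightarrow> 'a set \<Rightarrow> 'a set set \<Rightarrow> bool" where
  "h_invariant h H \<F> \<longleftrightarrow> (\<forall>A. A \<subseteq> H \<longrightarrow> (A \<in> \<F> \<longleftrightarrow> h ` A \<in> \<F>))"

definition left_invariant :: "('a, 'b) monoid_scheme \<Rightarrow> 'a set set \<Rightarrow> bool" where
  "left_invariant G \<F> \<longleftrightarrow> (\<forall>F\<in>\<F>. \<forall>x\<in>carrier G. x <#\<^bsub>G\<^esub> F \<in> \<F>)"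

definition lower_family :: "'a set set \<Rightarrow> bool" where
  "lower_family \<F> \<longleftrightarrow> (\<forall>A\<in>\<F>. \<forall>B. B \<subseteq> A \<longrightarrow> B \<in> \<F>)"

definition is_succ :: "'o::wellorder \<Rightarrow> 'o \<Rightarrow> bool" where
  "is_succ \<alpha> \<beta> \<longleftrightarrow> \<alpha> < \<beta> \<and> (\<forall>\<gamma>. \<alpha> < \<gamma> \<longrightarrow> \<beta> \<le> \<gamma>)"

end

theory Submission
  imports Defs
begin

(* Call a family L of subsets of G admissible (for h : H -> K) if it is
   lower, left-invariant and reflects h: S \<subseteq> H and h(S) \<in> L imply S \<in> L.
   (1) A \<in> tau(L) iff A \<inter> gA \<in> L for every g \<noteq> e, provided L is left-invariant,
       because xA \<inter> yA = x(A \<inter> x^-1 y A).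
   (2) tau preserves admissibility: for S \<subseteq> H the set S \<inter> gS is empty when g \<notin> H,
       and h(S \<inter> gS) = h(S) \<inter> h(g)h(S) when g \<in> H, where h(g) \<noteq> e.
       Unions of admissible families are admissible, so by transfinite induction every
       tau^\<gamma>(F) is admissible; moreover L \<subseteq> tau(L) for such L, so the iterates increase
       and tau^(\<alpha>+1)(F) = tau(tau^\<alpha>(F)).
   (3) If B \<union> zB \<in> tau(L) with z \<noteq> e, then zB \<subseteq> (B \<union> zB) \<inter> z(B \<union> zB) \<in> L, hence B \<in> L.
   The theorem follows from (3) with B = h(A) and L = tau^\<alpha>(F), followed by reflection
   of h(A) \<in> tau^\<alpha>(F) back to A \<in> tau^\<alpha>(F). *)

lemma l_coset_as_image: "x <#\<^bsub>G\<^esub> S = (\<lambda>s. x \<otimes>\<^bsub>G\<^esub> s) ` S"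
  by (auto simp: l_coset_def)

lemma l_coset_mono: "B \<subseteq> A \<Longrightarrow> x <#\<^bsub>G\<^esub> B \<subseteq> x <#\<^bsub>G\<^esub> A"
  by (auto simp: l_coset_def)

lemma (in group) l_coset_Int:
  assumes "x \<in> carrier G" "A \<subseteq> carrier G" "B \<subseteq> carrier G"
  shows "x <# (A \<inter> B) = (x <# A) \<inter> (x <# B)"
  unfolding l_coset_as_image
  by (rule inj_on_image_Int[OF _ assms(2,3)]) (use assms(1) in \<open>auto intro: inj_onI\<close>)

lemma (in group) l_coset_Int_l_coset:
  assumes "x \<in> carrier G" "y \<in> carrier G" "A \<subseteq> carrier G"
  shows "(x <# A) \<inter> (y <# A) = x <# (A \<inter> ((inv x \<otimes> y) <# A))"
proof -
  have "y <# A = x <# ((inv x \<otimes> y) <# A)"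
    using assms by (simp add: lcos_m_assoc m_assoc[symmetric])
  then show ?thesis
    using assms by (simp add: l_coset_Int l_coset_subset_G)
qed

lemma (in group) subgroup_Int_l_coset_empty:
  assumes H: "subgroup H G" and S: "S \<subseteq> H" and g: "g \<in> carrier G" "g \<notin> H"
  shows "S \<inter> (g <# S) = {}"
proof (rule ccontr)
  assume "S \<inter> (g <# S) \<noteq> {}"
  then obtain s s' where s: "s \<in> S" "s' \<in> S" "s = g \<otimes> s'"
    by (auto simp: l_coset_def)
  have s'G: "s' \<in> carrier G" using s(2) S subgroup.mem_carrier[OF H] by blast
  have "g = s \<otimes> inv s'"
    using s(3) g(1) s'G by (simp add: m_assoc)
  moreover have "s \<otimes> inv s' \<in> H"
    using s(1,2) S H by (blast intro: subgroup.m_closed subgroup.m_inv_closed)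
  ultimately show False using g(2) by simp
qed

lemma (in group) hom_image_Int_l_coset:
  assumes H: "subgroup H G" and hom: "h \<in> hom (G\<lparr>carrier := H\<rparr>) G" and inj: "inj_on h H"
    and S: "S \<subseteq> H" and g: "g \<in> H"
  shows "h ` (S \<inter> (g <# S)) = h ` S \<inter> (h g <# h ` S)"
proof -
  have mult: "h (g \<otimes> s) = h g \<otimes> h s" if "s \<in> H" for s
    using hom_mult[OF hom, of g s] g that by simp
  have gS: "g <# S \<subseteq> H"
    using S g by (auto simp: l_coset_def intro: subgroup.m_closed[OF H])
  have "h ` (g <# S) = h g <# h ` S"
    using S mult by (force simp: l_coset_as_image image_image)
  then show ?thesis
    using inj_on_image_Int[OF inj S gS] by simp
qed

lemma (in group) tau_iff:
  assumes inv: "left_invariant G L"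
  shows "A \<in> tau G L \<longleftrightarrow> A \<subseteq> carrier G \<and> (\<forall>g\<in>carrier G. g \<noteq> \<one> \<longrightarrow> A \<inter> (g <# A) \<in> L)"
proof
  assume A: "A \<in> tau G L"
  then have AG: "A \<subseteq> carrier G" unfolding tau_def by blast
  have "(\<one> <# A) \<inter> (g <# A) \<in> L" if "g \<in> carrier G" "g \<noteq> \<one>" for g
    using A that unfolding tau_def by auto
  then show "A \<subseteq> carrier G \<and> (\<forall>g\<in>carrier G. g \<noteq> \<one> \<longrightarrow> A \<inter> (g <# A) \<in> L)"
    using AG by (simp add: lcos_mult_one)
next
  assume A: "A \<subseteq> carrier G \<and> (\<forall>g\<in>carrier G. g \<noteq> \<one> \<longrightarrow> A \<inter> (g <# A) \<in> L)"
  show "A \<in> tau G L" unfolding tau_def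
  proof (intro CollectI conjI ballI impI)
    show "A \<subseteq> carrier G" using A by blast
    fix x y assume x: "x \<in> carrier G" and y: "y \<in> carrier G" and xy: "x \<noteq> y"
    have "inv x \<otimes> y \<noteq> \<one>"
      using x y xy by (metis inv_closed inv_inv inv_equality)
    then have "A \<inter> ((inv x \<otimes> y) <# A) \<in> L"
      using A x y by simp
    then have "x <# (A \<inter> ((inv x \<otimes> y) <# A)) \<in> L"
      using inv x unfolding left_invariant_def by blast
    then show "(x <# A) \<inter> (y <# A) \<in> L"
      using A x y by (simp add: l_coset_Int_l_coset)
  qed
qed

definition admissible :: "('a, 'b) monoid_scheme \<Rightarrow> ('a \<Rightarrow> 'a) \<Rightarrow> 'a set \<Rightarrow> 'a set set \<Rightarrow> bool" where
  "admissible G h H L \<longleftrightarrow> L \<subseteq> Pow (carrier G) \<and> lower_family L \<and> left_invariant G L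
     \<and> (\<forall>S. S \<subseteq> H \<longrightarrow> h ` S \<in> L \<longrightarrow> S \<in> L)"

text \<open>Admissibility is closed under unions, which handles limit stages.\<close>
lemma admissible_Union:
  "(\<And>L. L \<in> M \<Longrightarrow> admissible G h H L) \<Longrightarrow> admissible G h H (\<Union>M)"
  unfolding admissible_def lower_family_def left_invariant_def by blast

lemma lower_family_tau:
  assumes low: "lower_family L" shows "lower_family (tau G L)"
  unfolding lower_family_def
proof (intro ballI allI impI)
  fix A B assume A: "A \<in> tau G L" and BA: "B \<subseteq> A"
  have "(x <#\<^bsub>G\<^esub> B) \<inter> (y <#\<^bsub>G\<^esub> B) \<in> L"
    if "x \<in> carrier G" "y \<in> carrier G" "x \<noteq> y" for x y
  proof -
    have "(x <#\<^bsub>G\<^esub> A) \<inter> (y <#\<^bsub>G\<^esub> A) \<in> L" using A that unfolding tau_def by blast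
    moreover have "(x <#\<^bsub>G\<^esub> B) \<inter> (y <#\<^bsub>G\<^esub> B) \<subseteq> (x <#\<^bsub>G\<^esub> A) \<inter> (y <#\<^bsub>G\<^esub> A)"
      using l_coset_mono[OF BA] by blast
    ultimately show ?thesis using low unfolding lower_family_def by blast
  qed
  then show "B \<in> tau G L" using A BA unfolding tau_def by blast
qed

text \<open>tau(L) is left-invariant for every family L, since x(gA) = (xg)A.\<close>
lemma (in group) left_invariant_tau: "left_invariant G (tau G L)"
  unfolding left_invariant_def
proof (intro ballI)
  fix A g assume A: "A \<in> tau G L" and g: "g \<in> carrier G"
  have AG: "A \<subseteq> carrier G" using A unfolding tau_def by blast
  show "g <# A \<in> tau G L" unfolding tau_def
  proof (intro CollectI conjI ballI impI)
    show "g <# A \<subseteq> carrier G" using AG g by (rule l_coset_subset_G)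
    fix x y assume x: "x \<in> carrier G" and y: "y \<in> carrier G" and xy: "x \<noteq> y"
    have "x \<otimes> g \<noteq> y \<otimes> g" using x y g xy by simp
    then have "((x \<otimes> g) <# A) \<inter> ((y \<otimes> g) <# A) \<in> L"
      using A x y g unfolding tau_def by auto
    then show "(x <# (g <# A)) \<inter> (y <# (g <# A)) \<in> L"
      using x y g AG by (simp add: lcos_m_assoc)
  qed
qed

lemma (in group) tau_reflects:
  assumes H: "subgroup H G" and hom: "h \<in> hom (G\<lparr>carrier := H\<rparr>) G" and inj: "inj_on h H"
    and low: "lower_family L" and inv: "left_invariant G L"
    and refl: "\<And>S. S \<subseteq> H \<Longrightarrow> h ` S \<in> L \<Longrightarrow> S \<in> L"
    and S: "S \<subseteq> H" and hS: "h ` S \<in> tau G L"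
  shows "S \<in> tau G L"
proof -
  have hS_trans: "h ` S \<inter> (g <# h ` S) \<in> L" if "g \<in> carrier G" "g \<noteq> \<one>" for g
    using hS that tau_iff[OF inv] by blast
  have "S \<inter> (g <# S) \<in> L" if g: "g \<in> carrier G" "g \<noteq> \<one>" for g
  proof (cases "g \<in> H")
    case True
    have "h g \<noteq> h \<one>"
      using inj_onD[OF inj _ True subgroup.one_closed[OF H]] g(2) by blast
    moreover have "h \<one> = \<one>"
      using hom_one[OF hom subgroup.subgroup_is_group[OF H is_group] is_group] by simp
    moreover have "h g \<in> carrier G"
      using hom True unfolding hom_def by auto
    ultimately have "h ` (S \<inter> (g <# S)) \<in> L"
      using hS_trans hom_image_Int_l_coset[OF H hom inj S True] by simp
    then show ?thesis using refl S by blast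
  next
    case False
    have "{} \<in> L"
      using hS_trans[OF g] low unfolding lower_family_def by blast
    then show ?thesis using subgroup_Int_l_coset_empty[OF H S g(1) False] by simp
  qed
  moreover have "S \<subseteq> carrier G" using S subgroup.subset[OF H] by blast
  ultimately show ?thesis using tau_iff[OF inv] by blast
qed

lemma (in group) admissible_tau:
  assumes H: "subgroup H G" and hom: "h \<in> hom (G\<lparr>carrier := H\<rparr>) G" and inj: "inj_on h H"
    and adm: "admissible G h H L"
  shows "admissible G h H (tau G L)"
  unfolding admissible_def
proof (intro conjI allI impI)
  have low: "lower_family L" and inv: "left_invariant G L"
    and refl: "\<And>S. S \<subseteq> H \<Longrightarrow> h ` S \<in> L \<Longrightarrow> S \<in> L"
    using adm unfolding admissible_def by auto
  show "tau G L \<subseteq> Pow (carrier G)" unfolding tau_def by blast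
  show "lower_family (tau G L)" using low by (rule lower_family_tau)
  show "left_invariant G (tau G L)" by (rule left_invariant_tau)
  fix S assume "S \<subseteq> H" "h ` S \<in> tau G L"
  then show "S \<in> tau G L" using tau_reflects[OF H hom inj low inv refl] by blast
qed

lemma subset_tau:
  assumes LG: "L \<subseteq> Pow (carrier G)" and low: "lower_family L" and inv: "left_invariant G L"
  shows "L \<subseteq> tau G L"
proof
  fix A assume A: "A \<in> L"
  have "(x <#\<^bsub>G\<^esub> A) \<inter> (y <#\<^bsub>G\<^esub> A) \<in> L" if "x \<in> carrier G" for x y
  proof -
    have "x <#\<^bsub>G\<^esub> A \<in> L" using inv A that unfolding left_invariant_def by blast
    then show ?thesis using low unfolding lower_family_def by blast
  qed
  then show "A \<in> tau G L" using LG A unfolding tau_def by blast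
qed

lemma tau_iter_unfold:
  "tau_iter G F \<alpha> = (if \<forall>\<beta>. \<not> \<beta> < \<alpha> then F else tau G (\<Union>\<beta>\<in>{\<beta>. \<beta> < \<alpha>}. tau_iter G F \<beta>))"
proof -
  have "tau_iter G F = (\<lambda>r \<alpha>. if \<forall>\<beta>. \<not> \<beta> < \<alpha> then F else tau G (\<Union>\<beta>\<in>{\<beta>. \<beta> < \<alpha>}. r \<beta>)) (tau_iter G F)"
    unfolding tau_iter_def
    by (rule wfrec_fixpoint[OF wf]) (auto simp: adm_wf_def intro!: arg_cong[where f = "tau G"])
  from fun_cong[OF this, of \<alpha>] show ?thesis by simp
qed

lemma (in group) admissible_tau_iter:
  assumes "subgroup H G" "h \<in> hom (G\<lparr>carrier := H\<rparr>) G" "inj_on h H" "admissible G h H F"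
  shows "admissible G h H (tau_iter G F (\<gamma>::'o::wellorder))"
proof (induction \<gamma> rule: less_induct)
  case (less \<gamma>)
  have "admissible G h H (\<Union>\<beta>\<in>{\<beta>. \<beta> < \<gamma>}. tau_iter G F \<beta>)"
    by (rule admissible_Union) (use less in auto)
  then show ?case
    using assms admissible_tau[OF assms(1-3)] by (subst tau_iter_unfold) simp
qed

text \<open>When all iterates are admissible, they increase and tau^(\<alpha>+1) = tau(tau^\<alpha>).\<close>
lemma tau_iter_succ:
  fixes \<alpha> \<beta> :: "'o::wellorder"
  assumes adm: "\<And>\<gamma>::'o. admissible G h H (tau_iter G F \<gamma>)" and succ: "is_succ \<alpha> \<beta>"
  shows "tau_iter G F \<beta> = tau G (tau_iter G F \<alpha>)"
proof -
  have grow: "tau_iter G F \<gamma> \<subseteq> tau_iter G F \<delta>" if "\<gamma> < \<delta>" for \<gamma> \<delta> :: 'o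
  proof -
    define U where "U = (\<Union>\<beta>\<in>{\<beta>. \<beta> < \<delta>}. tau_iter G F \<beta>)"
    have "admissible G h H U"
      unfolding U_def by (rule admissible_Union) (use adm in auto)
    then have "U \<subseteq> tau G U" unfolding admissible_def by (intro subset_tau) auto
    moreover have "tau_iter G F \<delta> = tau G U"
      using that unfolding U_def by (subst tau_iter_unfold) auto
    moreover have "tau_iter G F \<gamma> \<subseteq> U" using that unfolding U_def by blast
    ultimately show ?thesis by blast
  qed
  have "(\<Union>\<gamma>\<in>{\<gamma>. \<gamma> < \<beta>}. tau_iter G F \<gamma>) = tau_iter G F \<alpha>"
  proof
    have "tau_iter G F \<gamma> \<subseteq> tau_iter G F \<alpha>" if "\<gamma> < \<beta>" for \<gamma>
    proof -
      have "\<gamma> \<le> \<alpha>" using succ that unfolding is_succ_def by (meson not_le)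
      then show ?thesis using grow by (cases "\<gamma> = \<alpha>") auto
    qed
    then show "(\<Union>\<gamma>\<in>{\<gamma>. \<gamma> < \<beta>}. tau_iter G F \<gamma>) \<subseteq> tau_iter G F \<alpha>" by blast
    show "tau_iter G F \<alpha> \<subseteq> (\<Union>\<gamma>\<in>{\<gamma>. \<gamma> < \<beta>}. tau_iter G F \<gamma>)"
      using succ unfolding is_succ_def by blast
  qed
  moreover have "\<not> (\<forall>\<gamma>. \<not> \<gamma> < \<beta>)"
    using succ unfolding is_succ_def by blast
  ultimately show ?thesis by (subst tau_iter_unfold) auto
qed

lemma (in group) translate_Un_in_tau:
  assumes low: "lower_family L" and inv: "left_invariant G L"
    and B: "B \<subseteq> carrier G" and z: "z \<in> carrier G" "z \<noteq> \<one>"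
    and BzB: "B \<union> (z <# B) \<in> tau G L"
  shows "B \<in> L"
proof -
  have "(B \<union> (z <# B)) \<inter> (z <# (B \<union> (z <# B))) \<in> L"
    using BzB z tau_iff[OF inv] by blast
  moreover have "z <# B \<subseteq> (B \<union> (z <# B)) \<inter> (z <# (B \<union> (z <# B)))"
    by (intro Int_greatest Un_upper2 l_coset_mono Un_upper1)
  ultimately have "z <# B \<in> L"
    using low unfolding lower_family_def by blast
  then have "inv z <# (z <# B) \<in> L"
    using inv z unfolding left_invariant_def by simp
  then show "B \<in> L"
    using B z by (simp add: lcos_m_assoc lcos_mult_one)
qed

theorem lemma6p2:
  fixes G :: "('a, 'b) monoid_scheme" and h :: "'a \<Rightarrow> 'a"
    and H K A :: "'a set" and \<F> :: "'a set set" and \<alpha> \<beta> :: "'o::wellorder" and z :: 'a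
  assumes "group G"
    and "subgroup H G" and "subgroup K G"
    and "h \<in> iso (G\<lparr>carrier := H\<rparr>) (G\<lparr>carrier := K\<rparr>)"
    and "\<F> \<subseteq> Pow (carrier G)"
    and "h_invariant h H \<F>" and "left_invariant G \<F>" and "lower_family \<F>"
    and "A \<subseteq> H" and "A \<notin> tau_iter G \<F> \<alpha>"
    and "is_succ \<alpha> \<beta>"
    and "z \<in> carrier G" and "z \<noteq> \<one>\<^bsub>G\<^esub>"
  shows "h ` A \<union> (z <#\<^bsub>G\<^esub> (h ` A)) \<notin> tau_iter G \<F> \<beta>"
proof
  interpret group G by fact
  have hom: "h \<in> hom (G\<lparr>carrier := H\<rparr>) G" and inj: "inj_on h H"
    using assms(4) subgroup.subset[OF assms(3)] unfolding iso_def hom_def bij_betw_def by auto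
  have hA: "h ` A \<subseteq> carrier G"
    using hom assms(9) unfolding hom_def by auto
  have "admissible G h H \<F>"
    using assms(5-8) unfolding admissible_def h_invariant_def by blast
  then have adm: "admissible G h H (tau_iter G \<F> \<gamma>)" for \<gamma> :: 'o
    by (rule admissible_tau_iter[OF assms(2) hom inj])
  assume "h ` A \<union> (z <#\<^bsub>G\<^esub> (h ` A)) \<in> tau_iter G \<F> \<beta>"
  then have "h ` A \<union> (z <#\<^bsub>G\<^esub> (h ` A)) \<in> tau G (tau_iter G \<F> \<alpha>)"
    by (simp only: tau_iter_succ[OF adm assms(11)])
  moreover have "lower_family (tau_iter G \<F> \<alpha>)" "left_invariant G (tau_iter G \<F> \<alpha>)"
    using adm[of \<alpha>] unfolding admissible_def by auto
  ultimately have "h ` A \<in> tau_iter G \<F> \<alpha>"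
    using translate_Un_in_tau hA assms(12,13) by blast
  then have "A \<in> tau_iter G \<F> \<alpha>"
    using adm[of \<alpha>] assms(9) unfolding admissible_def by blast
  with assms(10) show False by contradiction
qed

end
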